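(* Let $w$ be a string of length $n$ and $i$ a position of $w$ with $i-\mu(i)\ge1$, $i+\mu(i)-1\le n$ and $\mu(i)>1$. Then there exists an integer $j$ with $i<j<i+\mu(i)$ such that either $\mu(j)=\mu(i)$ or $\mu(j)\ge 2\mu(i)$.
   Context: For a position $i\in\{1,\dots,n\}$ of $w$, the local period $\mu(i)$ is the least positive integer $\mu$ such that $w[j]=w[j+\mu]$ for all $j$ with $\max\{1,i-\mu\}\le j$ and $j+\mu\le\min\{n,i+\mu-1\}$. *)

theory Defs
  imports Main
begin

(* Strings are lists; positions are 1-based: w[j] is  w ! (j - 1). *)
definition sat_local_period :: "'a list \<Rightarrow> nat \<Rightarrow> nat \<Rightarrow> bool" where
  "sat_local_period w i m \<longleftrightarrow>
     (\<forall>j. max 1 (int i - int m) \<le> int j \<and> j + m \<le> min (length w) (i + m - 1)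
          \<longrightarrow> w ! (j - 1) = w ! (j + m - 1))"

definition local_period :: "'a list \<Rightarrow> nat \<Rightarrow> nat" where
  "local_period w i = (LEAST m. 0 < m \<and> sat_local_period w i m)"

end

theory Submission
  imports Defs "HOL-Library.List_Lexorder"
begin

text \<open>Write \<open>\<mu> = \<mu>(i)\<close>. The hypotheses place a square \<open>uu\<close> with \<open>|u| = \<mu>\<close> around \<open>i\<close>, and minimality
  of \<open>\<mu>\<close> forces \<open>u\<close> to be unbordered. As in the critical factorization theorem, take the start
  \<open>k\<close> of the lexicographically greatest proper suffix of \<open>u\<close>, for whichever of two opposite alphabet
  orders gives the later position: no repetition of period below \<open>\<mu>\<close> fits around \<open>i + k\<close>
  inside \<open>uu\<close>, so \<open>\<mu>(i + k) \<ge> \<mu>\<close>. A local period \<open>r\<close> at \<open>i + k\<close> with \<open>\<mu> < r < 2\<mu>\<close> would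
  combine with the period \<open>\<mu>\<close> of the square into the local period \<open>r - \<mu>\<close> at \<open>i + k\<close> or
  \<open>2\<mu> - r\<close> at \<open>i\<close>, contradicting minimality.\<close>

text \<open>A repetition of period \<open>q\<close> at the cut just before the 0-based position \<open>p\<close>, truncated at
  both ends of \<open>x\<close>; \<open>sat_local_period w i\<close> is \<open>local_rep w (i - 1)\<close>.\<close>

definition local_rep :: "'a list \<Rightarrow> nat \<Rightarrow> nat \<Rightarrow> bool" where
  "local_rep x p q \<longleftrightarrow> (\<forall>y. p \<le> y + q \<longrightarrow> y < p \<longrightarrow> y + q < length x \<longrightarrow> x ! y = x ! (y + q))"

definition has_period :: "'a list \<Rightarrow> nat \<Rightarrow> bool" where
  "has_period u d \<longleftrightarrow> (\<forall>s. s + d < length u \<longrightarrow> u ! s = u ! (s + d))"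

lemma sat_local_period_iff_local_rep:
  "1 \<le> i \<Longrightarrow> sat_local_period w i m \<longleftrightarrow> local_rep w (i - 1) m"
  unfolding sat_local_period_def local_rep_def
proof (intro iffI allI impI)
  fix y
  assume "1 \<le> i" and H: "\<forall>j. max 1 (int i - int m) \<le> int j \<and> j + m \<le> min (length w) (i + m - 1)
      \<longrightarrow> w ! (j - 1) = w ! (j + m - 1)"
    and "i - 1 \<le> y + m" "y < i - 1" "y + m < length w"
  then have "max 1 (int i - int m) \<le> int (Suc y) \<and> Suc y + m \<le> min (length w) (i + m - 1)"
    by auto
  then show "w ! y = w ! (y + m)" using H by fastforce
next
  fix j
  assume "1 \<le> i" and H: "\<forall>y. i - 1 \<le> y + m \<longrightarrow> y < i - 1 \<longrightarrow> y + m < length w \<longrightarrow> w ! y = w ! (y + m)"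
    and "max 1 (int i - int m) \<le> int j \<and> j + m \<le> min (length w) (i + m - 1)"
  then show "w ! (j - 1) = w ! (j + m - 1)" using H[rule_format, of "j - 1"] by auto
qed

lemma ex_sat_local_period: "\<exists>m. 0 < m \<and> sat_local_period w i m"
  by (rule exI[of _ "length w + 1"]) (auto simp: sat_local_period_def)

lemma local_period_pos: "0 < local_period w i"
  unfolding local_period_def using LeastI_ex[OF ex_sat_local_period] by blast

lemma local_rep_local_period: "1 \<le> i \<Longrightarrow> local_rep w (i - 1) (local_period w i)"
  unfolding local_period_def sat_local_period_iff_local_rep[symmetric]
  using LeastI_ex[OF ex_sat_local_period] by blast

lemma not_local_rep_below_local_period:
  "1 \<le> i \<Longrightarrow> 0 < q \<Longrightarrow> q < local_period w i \<Longrightarrow> \<not> local_rep w (i - 1) q"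
  unfolding local_period_def sat_local_period_iff_local_rep[symmetric]
  using not_less_Least by blast

lemma local_rep_take_drop:
  "local_rep w p q \<Longrightarrow> a \<le> p \<Longrightarrow> local_rep (take b (drop a w)) (p - a) q"
  unfolding local_rep_def by (auto simp: add.commute add.left_commute)

lemma local_rep_of_window:
  assumes "local_rep (take b (drop a w)) p q" "q \<le> p" "p + q \<le> b" "a + b \<le> length w"
  shows "local_rep w (a + p) q"
  unfolding local_rep_def
proof (intro allI impI)
  fix y assume "a + p \<le> y + q" "y < a + p" "y + q < length w"
  then show "w ! y = w ! (y + q)"
    using assms(1)[unfolded local_rep_def, rule_format, of "y - a"] assms(2-4)
    by (auto simp: add.commute add.left_commute)
qed

lemma square_at_local_rep:
  assumes "local_rep w p m" "m \<le> p" "p + m \<le> length w"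
  shows "take (2 * m) (drop (p - m) w) = take m (drop p w) @ take m (drop p w)"
proof (rule nth_equalityI)
  fix e assume "e < length (take (2 * m) (drop (p - m) w))"
  then show "take (2 * m) (drop (p - m) w) ! e = (take m (drop p w) @ take m (drop p w)) ! e"
    using assms(1)[unfolded local_rep_def, rule_format, of "p - m + e"] assms(2,3)
    by (auto simp: nth_append)
qed (use assms in auto)

lemma local_rep_square_of_period:
  assumes "has_period u d" "d \<le> length u"
  shows "local_rep (u @ u) (length u) (length u - d)"
  unfolding local_rep_def
proof (intro allI impI)
  fix y assume "length u \<le> y + (length u - d)" "y < length u" "y + (length u - d) < length (u @ u)"
  then show "(u @ u) ! y = (u @ u) ! (y + (length u - d))"
    using assms(1)[unfolded has_period_def, rule_format, of "y - d"] assms(2)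
    by (auto simp: nth_append)
qed

lemma local_rep_map_iff:
  "inj_on f (set x) \<Longrightarrow> local_rep (map f x) p q \<longleftrightarrow> local_rep x p q"
  unfolding local_rep_def by (auto simp: inj_on_eq_iff)

lemma has_period_map_iff:
  "inj_on f (set u) \<Longrightarrow> has_period (map f u) d \<longleftrightarrow> has_period u d"
  unfolding has_period_def by (auto simp: inj_on_eq_iff)

lemma append_le_append_iff: "xs @ ys \<le> xs @ zs \<longleftrightarrow> ys \<le> (zs :: 'a :: linorder list)"
  by (induction xs) auto

lemma less_append: "ys \<noteq> [] \<Longrightarrow> xs < xs @ (ys :: 'a :: linorder list)"
  by (induction xs) (auto simp: neq_Nil_conv)

lemma take_eq_if_le_both_orders:
  fixes a b :: "int list"
  assumes "a \<le> b" "map uminus a \<le> map uminus b"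
  shows "take (length a) b = a"
  using assms
proof (induction a arbitrary: b)
  case (Cons x a)
  then obtain y b' where "b = y # b'" by (cases b) auto
  with Cons show ?case by auto
qed simp

definition greatest_proper_suffix :: "'a :: linorder list \<Rightarrow> nat \<Rightarrow> bool" where
  "greatest_proper_suffix u k \<longleftrightarrow> 0 < k \<and> k < length u \<and>
     (\<forall>p. 0 < p \<longrightarrow> p < length u \<longrightarrow> drop p u \<le> drop k u)"

lemma ex_greatest_proper_suffix:
  assumes "2 \<le> length u"
  shows "\<exists>k. greatest_proper_suffix u k"
proof -
  define P where "P = {p. 0 < p \<and> p < length u}"
  have "finite P" "P \<noteq> {}" using assms unfolding P_def by auto
  then have "Max ((\<lambda>p. drop p u) ` P) \<in> (\<lambda>p. drop p u) ` P" by simp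
  then obtain k where "k \<in> P" "drop k u = Max ((\<lambda>p. drop p u) ` P)" by auto
  with \<open>finite P\<close> show ?thesis unfolding greatest_proper_suffix_def P_def by auto
qed

lemma greatest_proper_suffix_drop_le:
  "greatest_proper_suffix u k \<Longrightarrow> 0 < p \<Longrightarrow> drop p u \<le> drop k u"
  unfolding greatest_proper_suffix_def by (cases "p < length u") auto

lemma not_local_rep_at_greatest_proper_suffix:
  assumes k: "greatest_proper_suffix u k" and q: "0 < q" "q < k" and rep: "local_rep u k q"
  shows False
proof -
  define v where "v = drop k u"
  define x where "x = drop (k - q) u"
  have "v \<noteq> []" "length x = length v + q" using k q unfolding greatest_proper_suffix_def v_def x_def by auto
  have "drop q x = v" using q unfolding x_def v_def by simp
  then have x_split: "x = take q x @ v" by (metis append_take_drop_id)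
  have x_agrees: "x ! e = v ! e" if "e < q" "e < length v" for e
    using rep[unfolded local_rep_def, rule_format, of "k - q + e"] that q
    unfolding x_def v_def by auto
  have "x \<le> v" using k q unfolding x_def v_def by (auto intro: greatest_proper_suffix_drop_le)
  show False
  proof (cases "q \<le> length v")
    case True
    then have "take q x = take q v" using \<open>length x = length v + q\<close>
      by (intro nth_equalityI) (auto simp: x_agrees)
    with \<open>x \<le> v\<close> x_split have "take q v @ v \<le> take q v @ drop q v" by simp
    then have "v \<le> drop q v" by (simp only: append_le_append_iff)
    moreover have "drop q v \<le> v"
      using k q unfolding v_def by (auto intro: greatest_proper_suffix_drop_le)
    ultimately have "v = drop q v" by simp
    then have "length v = length v - q" by (metis length_drop)
    moreover have "0 < length v" using \<open>v \<noteq> []\<close> by simp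
    ultimately show False using q by linarith
  next
    case False
    then have "take (length v) x = v" using \<open>length x = length v + q\<close>
      by (intro nth_equalityI) (auto simp: x_agrees)
    moreover have "drop (length v) x \<noteq> []" using \<open>length x = length v + q\<close> q by simp
    ultimately have "v < x" by (metis append_take_drop_id less_append)
    with \<open>x \<le> v\<close> show False by simp
  qed
qed

lemma has_period_of_greatest_proper_suffixes:
  fixes u :: "int list"
  assumes k: "greatest_proper_suffix u k" and k': "greatest_proper_suffix (map uminus u) k'"
    and "k' \<le> k" and "k + q \<le> length u"
    and prefix_periodic: "\<And>e. e < k \<Longrightarrow> u ! e = u ! (e + q)"
  shows "has_period u q"
proof -
  define v where "v = drop k u"
  define z where "z = drop (k + q) u"
  have "0 < k" using k unfolding greatest_proper_suffix_def by simp
  have "z \<le> v" using \<open>0 < k\<close> k unfolding z_def v_def by (simp add: greatest_proper_suffix_drop_le)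
  have "map uminus z \<le> map uminus v"
  proof (cases "z = []")
    case False
    define t where "t = take (k - k') (drop k' u)"
    have "drop k' u = t @ v"
      unfolding t_def v_def using \<open>k' \<le> k\<close> by (metis append_take_drop_id drop_drop le_add_diff_inverse2)
    moreover have "drop (k' + q) u = t @ z"
    proof -
      have "take (k - k') (drop (k' + q) u) = t"
        unfolding t_def using \<open>k' \<le> k\<close> \<open>k + q \<le> length u\<close>
        by (intro nth_equalityI) (auto simp: prefix_periodic add.commute add.left_commute)
      moreover have "drop (k - k') (drop (k' + q) u) = z"
        unfolding z_def using \<open>k' \<le> k\<close> by simp
      ultimately show ?thesis by (metis append_take_drop_id)
    qed
    moreover have "drop (k' + q) (map uminus u) \<le> drop k' (map uminus u)"
      using k' by (intro greatest_proper_suffix_drop_le) (auto simp: greatest_proper_suffix_def)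
    ultimately show ?thesis by (simp add: drop_map append_le_append_iff)
  qed simp
  with \<open>z \<le> v\<close> have "take (length z) v = z" by (rule take_eq_if_le_both_orders)
  show ?thesis
    unfolding has_period_def
  proof (intro allI impI)
    fix s assume "s + q < length u"
    show "u ! s = u ! (s + q)"
    proof (cases "s < k")
      case False
      then have "s - k < length z" using \<open>s + q < length u\<close> unfolding z_def by simp
      then have "v ! (s - k) = z ! (s - k)" using \<open>take (length z) v = z\<close> by (metis nth_take)
      then show ?thesis using False \<open>s + q < length u\<close> unfolding v_def z_def by (simp add: add.commute)
    qed (rule prefix_periodic)
  qed
qed

text \<open>Negation reverses the order of the alphabet, so \<open>k'\<close> belongs to the opposite order.\<close>

lemma not_local_rep_at_greatest_proper_suffixes:
  fixes u :: "int list"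
  assumes unbordered: "\<And>d. 0 < d \<Longrightarrow> d < length u \<Longrightarrow> \<not> has_period u d"
    and k: "greatest_proper_suffix u k" and k': "greatest_proper_suffix (map uminus u) k'"
    and "k' \<le> k" and "0 < q" "q < length u"
  shows "\<not> local_rep (u @ u) (length u + k) q"
proof
  assume rep: "local_rep (u @ u) (length u + k) q"
  show False
  proof (cases "q < k")
    case True
    have "local_rep u k q"
      using local_rep_take_drop[OF rep, of "length u" "length u"] by simp
    with not_local_rep_at_greatest_proper_suffix k \<open>0 < q\<close> True show False by blast
  next
    case False
    have prefix_periodic: "u ! e = u ! (e + q)" if "e < k" "e + q < length u" for e
      using rep[unfolded local_rep_def, rule_format, of "length u + e"] that False
      by (simp add: nth_append add.assoc)
    have "has_period u q"
    proof (cases "k + q \<le> length u")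
      case True
      then show ?thesis
        using has_period_of_greatest_proper_suffixes[OF k k' \<open>k' \<le> k\<close>] prefix_periodic by simp
    next
      case False
      then show ?thesis unfolding has_period_def using prefix_periodic by simp
    qed
    with unbordered \<open>0 < q\<close> \<open>q < length u\<close> show False by blast
  qed
qed

lemma critical_factorization_int:
  fixes u :: "int list"
  assumes "2 \<le> length u" and unbordered: "\<And>d. 0 < d \<Longrightarrow> d < length u \<Longrightarrow> \<not> has_period u d"
  shows "\<exists>k. 0 < k \<and> k < length u \<and>
    (\<forall>q. 0 < q \<longrightarrow> q < length u \<longrightarrow> \<not> local_rep (u @ u) (length u + k) q)"
proof -
  obtain k1 where k1: "greatest_proper_suffix u k1"
    using ex_greatest_proper_suffix assms(1) by blast
  obtain k2 where k2: "greatest_proper_suffix (map uminus u) k2"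
    using ex_greatest_proper_suffix[of "map uminus u"] assms(1) by auto
  show ?thesis
  proof (cases "k2 \<le> k1")
    case True
    then show ?thesis
      using not_local_rep_at_greatest_proper_suffixes[OF unbordered k1 k2] k1
      unfolding greatest_proper_suffix_def by blast
  next
    case False
    have inj: "inj_on uminus (set u)" by simp
    have "\<not> has_period (map uminus u) d" if "0 < d" "d < length u" for d
      using unbordered[OF that] has_period_map_iff[OF inj] by blast
    moreover have "greatest_proper_suffix (map uminus (map uminus u)) k1" using k1 by simp
    ultimately have "\<not> local_rep (map uminus u @ map uminus u) (length u + k2) q"
      if "0 < q" "q < length u" for q
      using not_local_rep_at_greatest_proper_suffixes[OF _ k2, of k1 q] False that by simp
    then show ?thesis
      using k2 local_rep_map_iff[of uminus "u @ u"] unfolding greatest_proper_suffix_def by auto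
  qed
qed

lemma critical_factorization:
  assumes "2 \<le> length u" and unbordered: "\<And>d. 0 < d \<Longrightarrow> d < length u \<Longrightarrow> \<not> has_period u d"
  shows "\<exists>k. 0 < k \<and> k < length u \<and>
    (\<forall>q. 0 < q \<longrightarrow> q < length u \<longrightarrow> \<not> local_rep (u @ u) (length u + k) q)"
proof -
  obtain f :: "'a \<Rightarrow> nat" where "inj_on f (set u)"
    using finite_imp_inj_to_nat_seg[of "set u"] by blast
  then have inj: "inj_on (int \<circ> f) (set u)" by (simp add: inj_on_def)
  then have "inj_on (int \<circ> f) (set (u @ u))" by simp
  with critical_factorization_int[of "map (int \<circ> f) u"] assms inj show ?thesis
    by (simp add: has_period_map_iff local_rep_map_iff flip: map_append)
qed

lemma ex_critical_point_in_square:
  assumes rep: "local_rep w p m" and "m \<le> p" "p + m \<le> length w" "2 \<le> m"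
    and minimal: "\<And>q. 0 < q \<Longrightarrow> q < m \<Longrightarrow> \<not> local_rep w p q"
  shows "\<exists>k. 0 < k \<and> k < m \<and> (\<forall>q. 0 < q \<longrightarrow> q < m \<longrightarrow> \<not> local_rep w (p + k) q)"
proof -
  define u where "u = take m (drop p w)"
  have "length u = m" using \<open>p + m \<le> length w\<close> unfolding u_def by simp
  have square: "take (2 * m) (drop (p - m) w) = u @ u"
    unfolding u_def using square_at_local_rep[OF assms(1-3)] .
  have "\<not> has_period u d" if "0 < d" "d < m" for d
  proof
    assume "has_period u d"
    then have "local_rep (u @ u) m (m - d)"
      using local_rep_square_of_period \<open>length u = m\<close> \<open>d < m\<close> by fastforce
    then have "local_rep w (p - m + m) (m - d)"
      using \<open>m \<le> p\<close> \<open>p + m \<le> length w\<close>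
      by (intro local_rep_of_window[where b = "2 * m"]) (simp_all add: square)
    with minimal that \<open>m \<le> p\<close> show False by simp
  qed
  then obtain k where "0 < k" "k < m" and critical: "\<forall>q. 0 < q \<longrightarrow> q < m \<longrightarrow> \<not> local_rep (u @ u) (m + k) q"
    using critical_factorization[of u] \<open>length u = m\<close> \<open>2 \<le> m\<close> by auto
  have "\<not> local_rep w (p + k) q" if "0 < q" "q < m" for q
  proof
    assume "local_rep w (p + k) q"
    then have "local_rep (u @ u) (p + k - (p - m)) q"
      using local_rep_take_drop[of w "p + k" q "p - m" "2 * m"] square by simp
    with critical that \<open>m \<le> p\<close> show False by (simp add: add.commute)
  qed
  with \<open>0 < k\<close> \<open>k < m\<close> show ?thesis by blast
qed

lemma local_rep_diff_of_period_between:
  assumes rep: "local_rep w p m" and "m \<le> p" "p + m \<le> length w"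
    and "0 < t" "t < m" and rep': "local_rep w (p + t) r" and "m < r" "r < 2 * m"
  shows "local_rep w (p + t) (r - m) \<or> local_rep w p (2 * m - r)"
proof -
  have square: "w ! y = w ! (y + m)" if "p - m \<le> y" "y < p" for y
    using rep[unfolded local_rep_def, rule_format, of y] that assms(2,3) by simp
  have long: "w ! y = w ! (y + r)" if "p + t \<le> y + r" "y < p + t" "y + r < length w" for y
    using rep' that unfolding local_rep_def by blast
  consider "r - m < t" | "t \<le> r - m" by linarith
  then show ?thesis
  proof cases
    case 1
    have "local_rep w (p + t) (r - m)"
      unfolding local_rep_def
    proof (intro allI impI)
      fix y assume y: "p + t \<le> y + (r - m)" "y < p + t" "y + (r - m) < length w"
      have "p < y" using y(1) 1 by linarith
      then have "w ! (y - m) = w ! y" using square[of "y - m"] y(2) assms(2,5) by simp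
      moreover have "y - m + r = y + (r - m)" using \<open>p < y\<close> assms(2,7) by simp
      moreover have "w ! (y - m) = w ! (y - m + r)" using long[of "y - m"] y \<open>p < y\<close> assms(2,5,7) by simp
      ultimately show "w ! y = w ! (y + (r - m))" by simp
    qed
    then show ?thesis ..
  next
    case 2
    have "local_rep w p (2 * m - r)"
      unfolding local_rep_def
    proof (intro allI impI)
      fix z assume z: "p \<le> z + (2 * m - r)" "z < p" "z + (2 * m - r) < length w"
      define y where "y = z - (r - m)"
      have "r - m \<le> z" using z(1) assms(2,7,8) by arith
      then have "y + r = z + m" "y + m = z + (2 * m - r)" using assms(7,8) unfolding y_def by arith+
      have "w ! z = w ! (z + m)" using square z assms(7) by simp
      moreover have "w ! y = w ! (y + r)" using long[of y] z 2 \<open>y + r = z + m\<close> assms(3) unfolding y_def by simp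
      moreover have "w ! y = w ! (y + m)" using square[of y] z assms(2,7) unfolding y_def by simp
      ultimately show "w ! z = w ! (z + (2 * m - r))"
        using \<open>y + r = z + m\<close> \<open>y + m = z + (2 * m - r)\<close> by simp
    qed
    then show ?thesis ..
  qed
qed

theorem lemma8:
  fixes w :: "'a list" and i :: nat
  assumes "1 \<le> i" and "i \<le> length w"
    and "int i - int (local_period w i) \<ge> 1"
    and "i + local_period w i - 1 \<le> length w"
    and "local_period w i > 1"
  shows "\<exists>j. i < j \<and> j < i + local_period w i \<and>
           (local_period w j = local_period w i \<or> local_period w j \<ge> 2 * local_period w i)"
proof -
  define m where "m = local_period w i"
  have rep: "local_rep w (i - 1) m"
    using local_rep_local_period[OF \<open>1 \<le> i\<close>] unfolding m_def .
  have window: "m \<le> i - 1" "i - 1 + m \<le> length w" "2 \<le> m"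
    using assms unfolding m_def by auto
  have minimal: "\<And>q. 0 < q \<Longrightarrow> q < m \<Longrightarrow> \<not> local_rep w (i - 1) q"
    using not_local_rep_below_local_period \<open>1 \<le> i\<close> unfolding m_def by blast
  obtain k where "0 < k" "k < m" and critical: "\<And>q. 0 < q \<Longrightarrow> q < m \<Longrightarrow> \<not> local_rep w (i - 1 + k) q"
    using ex_critical_point_in_square[OF rep window minimal] by blast
  define r where "r = local_period w (i + k)"
  have rep': "local_rep w (i - 1 + k) r"
    using local_rep_local_period[of "i + k" w] \<open>1 \<le> i\<close> unfolding r_def by simp
  have "m \<le> r"
    using critical[of r] rep' local_period_pos[of w "i + k"] unfolding r_def by force
  moreover have "\<not> (m < r \<and> r < 2 * m)"
  proof
    assume "m < r \<and> r < 2 * m"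
    then have "local_rep w (i - 1 + k) (r - m) \<or> local_rep w (i - 1) (2 * m - r)"
      using local_rep_diff_of_period_between[OF rep window(1,2) \<open>0 < k\<close> \<open>k < m\<close> rep'] by blast
    then show False
      using \<open>m < r \<and> r < 2 * m\<close> minimal not_local_rep_below_local_period[of "i + k" "r - m" w] \<open>1 \<le> i\<close>
      unfolding r_def by auto
  qed
  ultimately show ?thesis
    using \<open>0 < k\<close> \<open>k < m\<close> unfolding m_def r_def by (intro exI[of _ "i + k"]) auto
qed

end
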